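(* Let $f:\mathbb{N}\to[0,\infty)$ be weakly super-multiplicative with normal order $g:(0,\infty)\to(0,\infty)$, where $g$ is either non-decreasing or $\log$-uniformly continuous. Then the limit $\lim_{y\to\infty}\frac{\log g(y)}{\log y}$ (over real $y$) exists in $\mathbb{R}\cup\{\infty\}$ and equals $\sup_{n\ge2}\frac{\log f(n)}{\log n}$ (with the convention $\log 0=-\infty$).
   Context: A function $f:\mathbb{N}\to[0,\infty)$ is weakly super-multiplicative if for all $n\in\mathbb{N}$ and all $\epsilon>0$ there exist $x_0>0$ and $\delta>0$ such that for all real $x>x_0$, $\#\{m\in\mathbb{N}\cap[x,(1+\epsilon)x]: f(nm)\ge(1-\epsilon)f(n)f(m)\}\ge\delta x$. A function $f:\mathbb{N}\to[0,\infty)$ has normal order $g$ if for every $\epsilon>0$ the set $\{n\in\mathbb{N}: |f(n)-g(n)|\ge\epsilon g(n)\}$ has upper (natural) density $0$. A function $g:(0,\infty)\to(0,\infty)$ is $\log$-uniformly continuous if for every $\epsilon>0$ there is $\delta>0$ such that for all $x,y>0$ with $|x/y-1|<\delta$ we have $|g(x)/g(y)-1|<\epsilon$. *)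

theory Defs
  imports "HOL-Analysis.Analysis" "HOL-Library.Liminf_Limsup"
begin

text \<open>Natural numbers are the positive integers here.\<close>

definition weakly_super_multiplicative :: "(nat \<Rightarrow> real) \<Rightarrow> bool" where
  "weakly_super_multiplicative f \<longleftrightarrow>
     (\<forall>n\<ge>1. \<forall>\<epsilon>>0. \<exists>x0>0. \<exists>\<delta>>0. \<forall>x::real. x > x0 \<longrightarrow>
        real (card {m::nat. m \<ge> 1 \<and> x \<le> real m \<and> real m \<le> (1 + \<epsilon>) * x \<and>
                            f (n * m) \<ge> (1 - \<epsilon>) * f n * f m}) \<ge> \<delta> * x)"

definition upper_density :: "nat set \<Rightarrow> ereal" where
  "upper_density S = limsup (\<lambda>N. ereal (real (card (S \<inter> {1..N})) / real N))"

definition has_normal_order :: "(nat \<Rightarrow> real) \<Rightarrow> (real \<Rightarrow> real) \<Rightarrow> bool" where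
  "has_normal_order f g \<longleftrightarrow>
     (\<forall>\<epsilon>>0. upper_density {n. n \<ge> 1 \<and> \<bar>f n - g (real n)\<bar> \<ge> \<epsilon> * g (real n)} = 0)"

definition log_uniformly_continuous :: "(real \<Rightarrow> real) \<Rightarrow> bool" where
  "log_uniformly_continuous g \<longleftrightarrow>
     (\<forall>\<epsilon>>0. \<exists>\<delta>>0. \<forall>x y. x > 0 \<longrightarrow> y > 0 \<longrightarrow> \<bar>x / y - 1\<bar> < \<delta> \<longrightarrow>
        \<bar>g x / g y - 1\<bar> < \<epsilon>)"

definition log_ratio :: "(nat \<Rightarrow> real) \<Rightarrow> nat \<Rightarrow> ereal" where
  "log_ratio f n = (if f n = 0 then -\<infinity> else ereal (ln (f n) / ln (real n)))"

end

theory Submission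
  imports Defs
begin

text \<open>
  Upper bound: if f n \<le> n powr b for all n \<ge> 2, the normal order supplies, for every
  large y, some m in [y, 2y] with g m < 2 f m, and regularity of g gives C g y \<le> g m;
  hence ln (g y) \<le> b ln y + O(1).

  Lower bound: fix n with f n > 0. Weak super-multiplicativity and the normal order
  supply, for every large y, a multiplier m in [y, (1 + \<epsilon>) y] with
  f (n m) \<ge> (1 - \<epsilon>) f n f m at which both f m and f (n m) are within a factor 1 \<pm> \<epsilon>
  of g; with regularity this gives z in [n y, (1 + \<epsilon>) n y] and g z \<ge> c f n g y,
  where c \<rightarrow> 1 as \<epsilon> \<rightarrow> 0. Iterating from a fixed point gives an orbit along which ln g
  grows by ln (c f n) per step while ln y grows by between ln n and ln ((1 + \<epsilon>) n), and
  regularity bounds g from below between consecutive orbit points.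
\<close>

lemma upper_density_zero_imp_card_le:
  assumes "upper_density S = 0" and "\<theta> > 0"
  shows "\<forall>\<^sub>F N in sequentially. real (card (S \<inter> {1..N})) \<le> \<theta> * real N"
proof -
  have "limsup (\<lambda>N. ereal (real (card (S \<inter> {1..N})) / real N)) < ereal \<theta>"
    using assms unfolding upper_density_def by simp
  then have "\<forall>\<^sub>F N in sequentially. real (card (S \<inter> {1..N})) / real N < \<theta>"
    by (auto dest: Limsup_lessD)
  then show ?thesis
    using eventually_gt_at_top[of 0]
    by eventually_elim (simp add: divide_simps)
qed

lemma card_le_card_Int_plus_card_dilated:
  fixes S B :: "nat set"
  assumes "n \<ge> 1" and "S \<subseteq> {1..N}" and "\<And>m. m \<in> S \<Longrightarrow> m \<in> B \<or> n * m \<in> B"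
  shows "card S \<le> card (B \<inter> {1..N}) + card (B \<inter> {1..n * N})"
proof -
  let ?D = "{m\<in>{1..N}. n * m \<in> B}"
  have "card ?D \<le> card (B \<inter> {1..n * N})"
    using assms(1) by (intro card_inj_on_le[where f = "\<lambda>m. n * m"]) (auto simp: inj_on_def)
  moreover have "card S \<le> card ((B \<inter> {1..N}) \<union> ?D)"
    using assms(2,3) by (intro card_mono) auto
  ultimately show ?thesis
    using card_Un_le[of "B \<inter> {1..N}" ?D] by linarith
qed

lemma eventually_exists_good_multiplier:
  fixes f :: "nat \<Rightarrow> real" and g :: "real \<Rightarrow> real"
  assumes wsm: "weakly_super_multiplicative f" and normal: "has_normal_order f g"
    and "n \<ge> 1" and "\<epsilon> > 0"
  shows "\<forall>\<^sub>F x in at_top. \<exists>m. m \<ge> 1 \<and> x \<le> real m \<and> real m \<le> (1 + \<epsilon>) * x \<and>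
     (1 - \<epsilon>) * f n * f m \<le> f (n * m) \<and>
     \<bar>f m - g (real m)\<bar> < \<epsilon> * g (real m) \<and> \<bar>f (n * m) - g (real (n * m))\<bar> < \<epsilon> * g (real (n * m))"
proof -
  define B where "B = {k. k \<ge> 1 \<and> \<bar>f k - g (real k)\<bar> \<ge> \<epsilon> * g (real k)}"
  define S where "S x = {m::nat. m \<ge> 1 \<and> x \<le> real m \<and> real m \<le> (1 + \<epsilon>) * x \<and>
                            f (n * m) \<ge> (1 - \<epsilon>) * f n * f m}" for x
  obtain x0 \<delta> where "\<delta> > 0" and many: "\<And>x. x > x0 \<Longrightarrow> \<delta> * x \<le> real (card (S x))"
    using wsm \<open>n \<ge> 1\<close> \<open>\<epsilon> > 0\<close> unfolding weakly_super_multiplicative_def S_def by meson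
  define D where "D = 2 * (1 + real n) * (1 + \<epsilon>)"
  have "D > 0" using \<open>\<epsilon> > 0\<close> unfolding D_def by auto
  define \<theta> where "\<theta> = \<delta> / D"
  have "\<theta> > 0" using \<open>\<delta> > 0\<close> \<open>D > 0\<close> unfolding \<theta>_def by auto
  then obtain N0 where few: "\<And>N. N \<ge> N0 \<Longrightarrow> real (card (B \<inter> {1..N})) \<le> \<theta> * real N"
    using upper_density_zero_imp_card_le[of B] normal \<open>\<epsilon> > 0\<close>
    unfolding has_normal_order_def B_def eventually_sequentially by blast
  \<comment> \<open>At most \<theta> (N + n N) \<le> \<delta> x / 2 multipliers m \<le> N have m or n m in B.\<close>
  have "\<exists>m\<in>S x. m \<notin> B \<and> n * m \<notin> B" if x: "x > max x0 (real N0)" for x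
  proof (rule ccontr)
    assume bad: "\<not> ?thesis"
    define N where "N = nat \<lfloor>(1 + \<epsilon>) * x\<rfloor>"
    have "x > 0" using x \<open>\<epsilon> > 0\<close> by linarith
    have "real N \<le> (1 + \<epsilon>) * x" and SN: "S x \<subseteq> {1..N}"
      using \<open>x > 0\<close> \<open>\<epsilon> > 0\<close> unfolding N_def S_def by (auto simp: le_nat_floor)
    have "x \<le> (1 + \<epsilon>) * x" using \<open>x > 0\<close> \<open>\<epsilon> > 0\<close> by (simp add: algebra_simps)
    then have "real N0 \<le> (1 + \<epsilon>) * x" using x by linarith
    then have "N \<ge> N0" unfolding N_def by (simp add: le_nat_floor)
    have "real (card (S x)) \<le> real (card (B \<inter> {1..N})) + real (card (B \<inter> {1..n * N}))"
      using card_le_card_Int_plus_card_dilated[OF \<open>n \<ge> 1\<close> SN, of B] bad by force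
    also have "\<dots> \<le> \<theta> * real N + \<theta> * (real n * real N)"
      using few[of N] few[of "n * N"] \<open>N \<ge> N0\<close> \<open>n \<ge> 1\<close>
      by (metis add_mono le_trans mult_le_mono1 nat_mult_1 of_nat_mult)
    also have "\<dots> = \<theta> * (1 + real n) * real N" by (simp add: algebra_simps)
    also have "\<dots> \<le> \<theta> * (1 + real n) * ((1 + \<epsilon>) * x)"
      using \<open>real N \<le> (1 + \<epsilon>) * x\<close> \<open>\<theta> > 0\<close> by (intro mult_left_mono) auto
    also have "\<dots> = \<theta> * D * x / 2" unfolding D_def by (simp add: algebra_simps)
    also have "\<dots> = \<delta> * x / 2" using \<open>D > 0\<close> unfolding \<theta>_def by simp
    finally have "real (card (S x)) \<le> \<delta> * x / 2" .
    moreover have "\<delta> * x > 0" using \<open>\<delta> > 0\<close> \<open>x > 0\<close> by simp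
    ultimately show False using many[of x] x by linarith
  qed
  then show ?thesis
    unfolding eventually_at_top_dense using \<open>n \<ge> 1\<close>
    by (intro exI[of _ "max x0 (real N0)"]) (force simp: S_def B_def not_le)
qed

lemma regular_imp_almost_increasing:
  fixes g :: "real \<Rightarrow> real"
  assumes g_pos: "\<And>y. y > 0 \<Longrightarrow> g y > 0"
    and reg: "mono_on {0<..} g \<or> log_uniformly_continuous g" and "\<epsilon> > 0"
  shows "\<exists>\<eta>>0. \<forall>y z. 0 < y \<longrightarrow> y \<le> z \<longrightarrow> z \<le> (1 + \<eta>) * y \<longrightarrow> (1 - \<epsilon>) * g y \<le> g z"
  using reg
proof
  assume "mono_on {0<..} g"
  then have "(1 - \<epsilon>) * g y \<le> g z" if "0 < y" "y \<le> z" for y z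
    using that mono_onD[of "{0<..}" g y z] mult_pos_pos[OF \<open>\<epsilon> > 0\<close> g_pos[of y]]
    by (simp add: algebra_simps)
  then show ?thesis by (intro exI[of _ 1]) auto
next
  assume "log_uniformly_continuous g"
  then obtain \<delta> where "\<delta> > 0" and close: "\<And>x y. x > 0 \<Longrightarrow> y > 0 \<Longrightarrow> \<bar>x / y - 1\<bar> < \<delta> \<Longrightarrow>
        \<bar>g x / g y - 1\<bar> < \<epsilon>"
    using \<open>\<epsilon> > 0\<close> unfolding log_uniformly_continuous_def by meson
  have "(1 - \<epsilon>) * g y \<le> g z" if "0 < y" "y \<le> z" "z \<le> (1 + \<delta> / 2) * y" for y z
  proof -
    have "1 \<le> z / y" using that by simp
    moreover have "z / y \<le> 1 + \<delta> / 2" using that by (simp add: divide_le_eq mult.commute)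
    ultimately have "\<bar>z / y - 1\<bar> < \<delta>" using \<open>\<delta> > 0\<close> by linarith
    then have "1 - \<epsilon> < g z / g y" using close[of z y] that by linarith
    then show ?thesis using g_pos[of y] \<open>0 < y\<close> by (simp add: less_divide_eq)
  qed
  then show ?thesis using \<open>\<delta> > 0\<close> by (intro exI[of _ "\<delta> / 2"]) auto
qed

lemma almost_increasing_iterate:
  fixes g :: "real \<Rightarrow> real"
  assumes "\<eta> > 0" and "c \<ge> 0"
    and step: "\<And>y z. 0 < y \<Longrightarrow> y \<le> z \<Longrightarrow> z \<le> (1 + \<eta>) * y \<Longrightarrow> c * g y \<le> g z"
    and "0 < y" "y \<le> z" "z \<le> (1 + \<eta>) ^ j * y"
  shows "c ^ j * g y \<le> g z"
  using \<open>y \<le> z\<close> \<open>z \<le> (1 + \<eta>) ^ j * y\<close>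
proof (induction j arbitrary: z)
  case 0
  then show ?case by simp
next
  case (Suc j)
  define w where "w = max y (z / (1 + \<eta>))"
  have "y \<le> (1 + \<eta>) ^ j * y" using \<open>\<eta> > 0\<close> \<open>0 < y\<close> by simp
  moreover have "z / (1 + \<eta>) \<le> (1 + \<eta>) ^ j * y"
    using Suc.prems(2) \<open>\<eta> > 0\<close> by (simp add: divide_le_eq mult_ac)
  ultimately have "c ^ j * g y \<le> g w"
    by (intro Suc.IH) (auto simp: w_def)
  moreover have "c * g w \<le> g z"
  proof (rule step)
    have "z / (1 + \<eta>) \<le> z / 1"
      using Suc.prems \<open>\<eta> > 0\<close> \<open>0 < y\<close> by (intro divide_left_mono) auto
    then show "0 < w" "w \<le> z"
      using Suc.prems \<open>0 < y\<close> by (auto simp: w_def)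
    have "z / (1 + \<eta>) \<le> w" by (simp add: w_def)
    then show "z \<le> (1 + \<eta>) * w" using \<open>\<eta> > 0\<close> by (simp add: divide_le_eq mult.commute)
  qed
  ultimately have "c * (c ^ j * g y) \<le> g z"
    using \<open>c \<ge> 0\<close> by (meson mult_left_mono order_trans)
  then show ?case by simp
qed

lemma regular_imp_dilation_lower_bound:
  fixes g :: "real \<Rightarrow> real"
  assumes g_pos: "\<And>y. y > 0 \<Longrightarrow> g y > 0"
    and reg: "mono_on {0<..} g \<or> log_uniformly_continuous g"
  shows "\<exists>C>0. \<forall>y z. 0 < y \<longrightarrow> y \<le> z \<longrightarrow> z \<le> A * y \<longrightarrow> C * g y \<le> g z"
proof -
  obtain \<eta> where "\<eta> > 0" and step: "\<And>y z. 0 < y \<Longrightarrow> y \<le> z \<Longrightarrow> z \<le> (1 + \<eta>) * y \<Longrightarrow>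
      1/2 * g y \<le> g z"
    using regular_imp_almost_increasing[OF g_pos reg, of "1/2"] by auto
  obtain J where "A < (1 + \<eta>) ^ J"
    using real_arch_pow[of "1 + \<eta>" A] \<open>\<eta> > 0\<close> by auto
  have "(1/2) ^ J * g y \<le> g z" if "0 < y" "y \<le> z" "z \<le> A * y" for y z
  proof -
    have "A * y \<le> (1 + \<eta>) ^ J * y"
      using \<open>A < (1 + \<eta>) ^ J\<close> \<open>0 < y\<close> by (simp add: mult_right_mono)
    then have "z \<le> (1 + \<eta>) ^ J * y" using that by linarith
    then show ?thesis
      using almost_increasing_iterate[where g = g, OF \<open>\<eta> > 0\<close> _ step that(1,2)] by simp
  qed
  then show ?thesis by (intro exI[of _ "(1/2) ^ J"]) auto
qed

lemma eventually_ln_ratio_less_of_powr_bound: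
  fixes f :: "nat \<Rightarrow> real" and g :: "real \<Rightarrow> real"
  assumes g_pos: "\<And>y. y > 0 \<Longrightarrow> g y > 0"
    and wsm: "weakly_super_multiplicative f" and normal: "has_normal_order f g"
    and reg: "mono_on {0<..} g \<or> log_uniformly_continuous g"
    and f_le: "\<And>n. n \<ge> 2 \<Longrightarrow> f n \<le> real n powr b" and "b < c"
  shows "\<forall>\<^sub>F y in at_top. ln (g y) / ln y < c"
proof -
  obtain C where "C > 0" and dil: "\<And>y z. 0 < y \<Longrightarrow> y \<le> z \<Longrightarrow> z \<le> 2 * y \<Longrightarrow> C * g y \<le> g z"
    using regular_imp_dilation_lower_bound[OF g_pos reg, of 2] by auto
  define K where "K = ln (2 / C) + \<bar>b\<bar> * ln 2"
  have "\<forall>\<^sub>F y in at_top. K / (c - b) < ln y"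
    using ln_at_top by (simp add: filterlim_at_top_dense)
  moreover have "\<forall>\<^sub>F y in at_top. \<exists>m. m \<ge> 1 \<and> y \<le> real m \<and> real m \<le> (1 + 1/2) * y \<and>
      \<bar>f m - g (real m)\<bar> < 1/2 * g (real m)"
    by (rule eventually_mono[OF eventually_exists_good_multiplier[OF wsm normal, of 1 "1/2"]]) auto
  ultimately show ?thesis
    using eventually_ge_at_top[of 2]
  proof eventually_elim
    case (elim y)
    then obtain m where m: "y \<le> real m" "real m \<le> 2 * y" "\<bar>f m - g (real m)\<bar> < 1/2 * g (real m)"
      by auto
    have "y > 0" "m \<ge> 2" using elim m by auto
    have "C * g y \<le> g (real m)" using dil \<open>y > 0\<close> m by auto
    also have "\<dots> < 2 * f m" using m(3) abs_ge_minus_self[of "f m - g (real m)"] by linarith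
    also have "\<dots> \<le> 2 * real m powr b" using f_le[OF \<open>m \<ge> 2\<close>] by simp
    finally have "g y < 2 / C * real m powr b" using \<open>C > 0\<close> by (simp add: field_simps)
    then have "ln (g y) < ln (2 / C * real m powr b)"
      using g_pos[OF \<open>y > 0\<close>] by (simp add: ln_less_cancel_iff)
    also have "\<dots> = ln (2 / C) + b * ln (real m)"
      using \<open>C > 0\<close> \<open>m \<ge> 2\<close> ln_mult[of "2 / C" "real m powr b"] by (simp add: ln_powr)
    finally have "ln (g y) < ln (2 / C) + b * ln (real m)" .
    moreover have "b * ln (real m) \<le> b * ln y + \<bar>b\<bar> * ln 2"
    proof (cases "b \<ge> 0")
      case True
      have "ln (real m) \<le> ln (2 * y)" using m \<open>y > 0\<close> by simp
      then have "b * ln (real m) \<le> b * (ln 2 + ln y)"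
        using True \<open>y > 0\<close> by (simp add: ln_mult mult_left_mono)
      then show ?thesis using True by (simp add: algebra_simps)
    next
      case False
      have "b * ln (real m) \<le> b * ln y" using m \<open>y > 0\<close> False by (simp add: mult_left_mono_neg)
      moreover have "0 \<le> \<bar>b\<bar> * ln 2" by simp
      ultimately show ?thesis by linarith
    qed
    moreover have "K < (c - b) * ln y" using elim \<open>b < c\<close> by (simp add: divide_less_eq mult.commute)
    ultimately have "ln (g y) < c * ln y" unfolding K_def by (simp add: algebra_simps)
    then show ?case using elim by (simp add: divide_less_eq)
  qed
qed

lemma exists_bracketing_index:
  fixes t :: "nat \<Rightarrow> 'a::linorder"
  assumes "t 0 \<le> y" and "y < t j"
  shows "\<exists>k. t k \<le> y \<and> y < t (Suc k)"
  using assms(2)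
proof (induction j)
  case 0
  then show ?case using assms(1) by simp
next
  case (Suc j)
  then show ?case by (cases "y < t j") (auto simp: not_less)
qed

lemma exists_step_orbit:
  fixes h :: "real \<Rightarrow> real"
  assumes "1 \<le> q" "0 < Y"
    and step: "\<And>y. y \<ge> Y \<Longrightarrow> \<exists>z. q * y \<le> z \<and> z \<le> A * y \<and> h y + K \<le> h z"
  shows "\<exists>t. t 0 = Y \<and> (\<forall>k. q ^ k * Y \<le> t k \<and> t (Suc k) \<le> A * t k \<and> h Y + real k * K \<le> h (t k))"
proof -
  have "\<forall>y. \<exists>z. y \<ge> Y \<longrightarrow> q * y \<le> z \<and> z \<le> A * y \<and> h y + K \<le> h z"
    using step by blast
  then obtain s where s: "\<And>y. y \<ge> Y \<Longrightarrow> q * y \<le> s y \<and> s y \<le> A * y \<and> h y + K \<le> h (s y)"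
    by (metis choice)
  define t where "t k = (s ^^ k) Y" for k
  have t_Suc: "t (Suc k) = s (t k)" for k unfolding t_def by simp
  have orbit: "q ^ k * Y \<le> t k \<and> h Y + real k * K \<le> h (t k)" for k
  proof (induction k)
    case 0
    then show ?case by (simp add: t_def)
  next
    case (Suc k)
    have "Y \<le> q ^ k * Y" using \<open>1 \<le> q\<close> \<open>0 < Y\<close> by simp
    then have "t k \<ge> Y" using Suc by linarith
    have "q ^ Suc k * Y = q * (q ^ k * Y)" by simp
    also have "\<dots> \<le> q * t k" using Suc \<open>1 \<le> q\<close> by (simp add: mult_left_mono)
    finally show ?case using s[OF \<open>t k \<ge> Y\<close>] Suc by (auto simp: t_Suc algebra_simps)
  qed
  moreover have "t (Suc k) \<le> A * t k" for k
  proof -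
    have "Y \<le> q ^ k * Y" using \<open>1 \<le> q\<close> \<open>0 < Y\<close> by simp
    then show ?thesis using s[of "t k"] orbit[of k] by (simp add: t_Suc)
  qed
  ultimately show ?thesis by (intro exI[of _ t]) (simp add: t_def)
qed

lemma orbit_bracket_of_steps:
  fixes h :: "real \<Rightarrow> real"
  assumes "1 < q" "q \<le> A" "0 < Y" "Y \<le> y"
    and step: "\<And>y. y \<ge> Y \<Longrightarrow> \<exists>z. q * y \<le> z \<and> z \<le> A * y \<and> h y + K \<le> h z"
    and dip: "\<And>y z. Y \<le> y \<Longrightarrow> y \<le> z \<Longrightarrow> z \<le> A * y \<Longrightarrow> h y - D \<le> h z"
  shows "\<exists>k. ln Y + real k * ln q \<le> ln y \<and> ln y < ln Y + real (Suc k) * ln A \<and>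
           h Y + real k * K - D \<le> h y"
proof -
  obtain t where "t 0 = Y" and lower: "\<And>k. q ^ k * Y \<le> t k"
    and upper: "\<And>k. t (Suc k) \<le> A * t k" and grow: "\<And>k. h Y + real k * K \<le> h (t k)"
    using exists_step_orbit[OF _ \<open>0 < Y\<close> step] \<open>1 < q\<close> by force
  have t_ge: "Y \<le> t k" for k
  proof -
    have "1 * Y \<le> q ^ k * Y" using \<open>1 < q\<close> \<open>0 < Y\<close> by (intro mult_right_mono) auto
    then show ?thesis using lower[of k] by simp
  qed
  have t_le: "t k \<le> A ^ k * Y" for k
  proof (induction k)
    case 0
    then show ?case using \<open>t 0 = Y\<close> by simp
  next
    case (Suc k)
    then show ?case using upper[of k] \<open>1 < q\<close> \<open>q \<le> A\<close> by (simp add: mult_left_mono order_trans mult.assoc)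
  qed
  obtain j where "y / Y < q ^ j" using real_arch_pow \<open>1 < q\<close> by blast
  then have "y < t j" using lower[of j] \<open>0 < Y\<close> by (simp add: divide_less_eq mult.commute)
  then obtain k where k: "t k \<le> y" "y < t (Suc k)"
    using exists_bracketing_index[of t y j] \<open>t 0 = Y\<close> \<open>Y \<le> y\<close> by auto
  have "0 < q ^ k * Y" using \<open>1 < q\<close> \<open>0 < Y\<close> by simp
  then have "ln (q ^ k * Y) \<le> ln y" using lower[of k] k(1) by simp
  then have ln_lower: "ln Y + real k * ln q \<le> ln y"
    using \<open>1 < q\<close> \<open>0 < Y\<close> by (simp add: ln_mult ln_realpow)
  have "0 < y" using \<open>Y \<le> y\<close> \<open>0 < Y\<close> by linarith
  then have "ln y < ln (A ^ Suc k * Y)" using k(2) t_le[of "Suc k"] by simp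
  then have ln_upper: "ln y < ln Y + real (Suc k) * ln A"
    using \<open>1 < q\<close> \<open>q \<le> A\<close> \<open>0 < Y\<close> by (simp add: ln_mult ln_realpow algebra_simps)
  have h_lower: "h Y + real k * K - D \<le> h y"
    using dip[OF t_ge[of k] k(1)] grow[of k] upper[of k] k(2) by linarith
  show ?thesis using ln_lower ln_upper h_lower by blast
qed

lemma eventually_mult_ln_less_of_steps:
  fixes h :: "real \<Rightarrow> real"
  assumes "1 < q" "q \<le> A" "0 < Y"
    and step: "\<And>y. y \<ge> Y \<Longrightarrow> \<exists>z. q * y \<le> z \<and> z \<le> A * y \<and> h y + K \<le> h z"
    and dip: "\<And>y z. Y \<le> y \<Longrightarrow> y \<le> z \<Longrightarrow> z \<le> A * y \<Longrightarrow> h y - D \<le> h z"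
    and "a * ln q < K" "a * ln A < K"
  shows "\<forall>\<^sub>F y in at_top. a * ln y < h y"
proof -
  define L where "L = ln A"
  \<comment> \<open>Each orbit step gains at least G more in h than in a ln y; M absorbs both ends.\<close>
  define G where "G = K - max (a * ln q) (a * L)"
  define M where "M = a * ln Y + \<bar>a\<bar> * L + D - h Y"
  have "L > 0" "G > 0" using assms unfolding L_def G_def by auto
  have pointwise: "a * ln y < h y" if "Y \<le> y" "ln Y + L * (1 + M / G) < ln y" for y
  proof -
    obtain k where ln_lower: "ln Y + real k * ln q \<le> ln y"
      and ln_upper: "ln y < ln Y + real (Suc k) * L" and h_lower: "h Y + real k * K - D \<le> h y"
      using orbit_bracket_of_steps[OF \<open>1 < q\<close> \<open>q \<le> A\<close> \<open>0 < Y\<close> \<open>Y \<le> y\<close> step dip]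
      unfolding L_def by blast
    have "L * (M / G) < L * real k"
      using ln_upper that(2) by (simp add: algebra_simps)
    then have "M < real k * G" using \<open>L > 0\<close> \<open>G > 0\<close> by (simp add: divide_less_eq mult.commute)
    moreover have "a * ln y \<le> a * ln Y + \<bar>a\<bar> * L + real k * max (a * ln q) (a * L)"
    proof (cases "a \<ge> 0")
      case True
      then have "a * ln y \<le> a * (ln Y + real (Suc k) * L)"
        using ln_upper by (intro mult_left_mono) auto
      moreover have "real k * (a * L) \<le> real k * max (a * ln q) (a * L)"
        by (intro mult_left_mono) auto
      ultimately show ?thesis using True by (simp add: algebra_simps)
    next
      case False
      then have "a * ln y \<le> a * (ln Y + real k * ln q)"
        using ln_lower by (intro mult_left_mono_neg) auto
      moreover have "real k * (a * ln q) \<le> real k * max (a * ln q) (a * L)"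
        by (intro mult_left_mono) auto
      moreover have "0 \<le> \<bar>a\<bar> * L" using \<open>L > 0\<close> by simp
      ultimately show ?thesis by (simp add: algebra_simps)
    qed
    ultimately show ?thesis using h_lower unfolding G_def M_def by (simp add: algebra_simps)
  qed
  have "\<forall>\<^sub>F y in at_top. ln Y + L * (1 + M / G) < ln y"
    using ln_at_top by (simp add: filterlim_at_top_dense)
  then show ?thesis
    using eventually_ge_at_top[of Y] by eventually_elim (simp add: pointwise)
qed

lemma approx_super_mult_transfer:
  fixes e \<epsilon> gy gm fm fn fnm gnm :: real
  assumes "0 \<le> e" "e \<le> \<epsilon>" "\<epsilon> < 1" "0 \<le> fn" "0 < gy"
    and "(1 - \<epsilon>) * gy \<le> gm" "\<bar>fm - gm\<bar> < e * gm"
    and "(1 - e) * fn * fm \<le> fnm" "\<bar>fnm - gnm\<bar> < e * gnm"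
  shows "(1 - \<epsilon>) ^ 3 * fn * gy \<le> (1 + \<epsilon>) * gnm"
proof -
  have "(1 - \<epsilon>) * ((1 - \<epsilon>) * gy) \<le> (1 - e) * gm"
    using assms by (intro mult_mono) auto
  also have "\<dots> \<le> fm" using \<open>\<bar>fm - gm\<bar> < e * gm\<close> by (simp add: abs_less_iff algebra_simps)
  finally have "(1 - \<epsilon>) ^ 2 * gy \<le> fm" by (simp add: power2_eq_square algebra_simps)
  then have "(1 - \<epsilon>) * (fn * ((1 - \<epsilon>) ^ 2 * gy)) \<le> (1 - e) * (fn * fm)"
    using assms by (intro mult_mono mult_left_mono) auto
  then have "(1 - \<epsilon>) ^ 3 * fn * gy \<le> fnm"
    using \<open>(1 - e) * fn * fm \<le> fnm\<close> by (simp add: power3_eq_cube power2_eq_square algebra_simps)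
  also have "\<dots> \<le> (1 + e) * gnm" using \<open>\<bar>fnm - gnm\<bar> < e * gnm\<close> by (simp add: abs_less_iff algebra_simps)
  also have "\<dots> \<le> (1 + \<epsilon>) * gnm"
  proof -
    have "0 < e * gnm" using \<open>\<bar>fnm - gnm\<bar> < e * gnm\<close> by linarith
    then have "0 \<le> gnm" using \<open>0 \<le> e\<close> by (simp add: zero_less_mult_iff)
    then show ?thesis using \<open>e \<le> \<epsilon>\<close> by (intro mult_right_mono) auto
  qed
  finally show ?thesis .
qed

lemma eventually_dilation_step:
  fixes f :: "nat \<Rightarrow> real" and g :: "real \<Rightarrow> real"
  assumes g_pos: "\<And>y. y > 0 \<Longrightarrow> g y > 0"
    and wsm: "weakly_super_multiplicative f" and normal: "has_normal_order f g"
    and reg: "mono_on {0<..} g \<or> log_uniformly_continuous g"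
    and "n \<ge> 1" "f n \<ge> 0" "0 < \<epsilon>" "\<epsilon> < 1"
  shows "\<forall>\<^sub>F y in at_top. \<exists>z. real n * y \<le> z \<and> z \<le> (1 + \<epsilon>) * real n * y \<and>
           (1 - \<epsilon>) ^ 3 / (1 + \<epsilon>) * f n * g y \<le> g z"
proof -
  obtain \<eta> where "\<eta> > 0" and almost_mono: "\<And>y z. 0 < y \<Longrightarrow> y \<le> z \<Longrightarrow> z \<le> (1 + \<eta>) * y \<Longrightarrow>
      (1 - \<epsilon>) * g y \<le> g z"
    using regular_imp_almost_increasing[OF g_pos reg \<open>0 < \<epsilon>\<close>] by auto
  define e where "e = min \<epsilon> \<eta>"
  have "0 < e" "e \<le> \<epsilon>" "e \<le> \<eta>" using \<open>0 < \<epsilon>\<close> \<open>\<eta> > 0\<close> by (auto simp: e_def)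
  show ?thesis
    using eventually_exists_good_multiplier[OF wsm normal \<open>n \<ge> 1\<close> \<open>0 < e\<close>] eventually_gt_at_top[of 0]
  proof eventually_elim
    case (elim y)
    then obtain m where m: "y \<le> real m" "real m \<le> (1 + e) * y" "(1 - e) * f n * f m \<le> f (n * m)"
      "\<bar>f m - g (real m)\<bar> < e * g (real m)" "\<bar>f (n * m) - g (real (n * m))\<bar> < e * g (real (n * m))"
      by blast
    have "(1 + e) * y \<le> (1 + \<eta>) * y" "(1 + e) * y \<le> (1 + \<epsilon>) * y"
      using \<open>e \<le> \<eta>\<close> \<open>e \<le> \<epsilon>\<close> \<open>0 < y\<close> by (auto intro: mult_right_mono)
    then have "(1 - \<epsilon>) * g y \<le> g (real m)" and "real m \<le> (1 + \<epsilon>) * y"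
      using almost_mono[of y "real m"] \<open>0 < y\<close> m(1,2) by linarith+
    then have "(1 - \<epsilon>) ^ 3 * f n * g y \<le> (1 + \<epsilon>) * g (real (n * m))"
      using approx_super_mult_transfer[OF _ \<open>e \<le> \<epsilon>\<close> \<open>\<epsilon> < 1\<close> \<open>f n \<ge> 0\<close> g_pos[OF \<open>0 < y\<close>] _ m(4,3,5)]
        \<open>0 < e\<close> by simp
    then have "(1 - \<epsilon>) ^ 3 / (1 + \<epsilon>) * f n * g y \<le> g (real (n * m))"
      using \<open>0 < \<epsilon>\<close> by (simp add: divide_simps mult.commute)
    moreover have "real n * y \<le> real (n * m)" using m(1) by (simp add: mult_left_mono)
    moreover have "real n * real m \<le> real n * ((1 + \<epsilon>) * y)"
      using \<open>real m \<le> (1 + \<epsilon>) * y\<close> by (simp add: mult_left_mono)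
    ultimately show ?case by (intro exI[of _ "real (n * m)"]) (simp add: algebra_simps)
  qed
qed

lemma exists_small_dilation_loss:
  fixes x r a :: real
  assumes "0 < x" "0 < r" "a * ln r < ln x"
  shows "\<exists>\<epsilon>. 0 < \<epsilon> \<and> \<epsilon> < 1 \<and> a * ln ((1 + \<epsilon>) * r) < ln ((1 - \<epsilon>) ^ 3 / (1 + \<epsilon>) * x) \<and>
             a * ln r < ln ((1 - \<epsilon>) ^ 3 / (1 + \<epsilon>) * x)"
proof -
  define c :: "real \<Rightarrow> real" where "c \<epsilon> = (1 - \<epsilon>) ^ 3 / (1 + \<epsilon>) * x" for \<epsilon>
  have "((\<lambda>\<epsilon>. ln (c \<epsilon>) - a * ln ((1 + \<epsilon>) * r)) \<longlongrightarrow> ln x - a * ln r) (at_right 0)"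
    unfolding c_def using assms by (auto intro!: tendsto_eq_intros)
  moreover have "((\<lambda>\<epsilon>. ln (c \<epsilon>) - a * ln r) \<longlongrightarrow> ln x - a * ln r) (at_right 0)"
    unfolding c_def using assms by (auto intro!: tendsto_eq_intros)
  ultimately have "\<forall>\<^sub>F \<epsilon> in at_right 0. 0 < ln (c \<epsilon>) - a * ln ((1 + \<epsilon>) * r) \<and>
      0 < ln (c \<epsilon>) - a * ln r \<and> 0 < \<epsilon> \<and> \<epsilon> < (1::real)"
    using \<open>a * ln r < ln x\<close>
    by (intro eventually_conj order_tendstoD(1) eventually_at_right_less)
      (auto simp: eventually_at_right_field intro!: exI[of _ 1])
  from eventually_happens'[OF trivial_limit_at_right_real this] obtain \<epsilon> where
    "0 < ln (c \<epsilon>) - a * ln ((1 + \<epsilon>) * r)" "0 < ln (c \<epsilon>) - a * ln r" "0 < \<epsilon>" "\<epsilon> < 1"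
    by blast
  then show ?thesis unfolding c_def by (intro exI[of _ \<epsilon>]) auto
qed

lemma eventually_less_ln_ratio_of_less:
  fixes f :: "nat \<Rightarrow> real" and g :: "real \<Rightarrow> real"
  assumes g_pos: "\<And>y. y > 0 \<Longrightarrow> g y > 0"
    and wsm: "weakly_super_multiplicative f" and normal: "has_normal_order f g"
    and reg: "mono_on {0<..} g \<or> log_uniformly_continuous g"
    and "n \<ge> 2" "f n > 0" "a < ln (f n) / ln (real n)"
  shows "\<forall>\<^sub>F y in at_top. a < ln (g y) / ln y"
proof -
  have "a * ln (real n) < ln (f n)"
    using \<open>a < ln (f n) / ln (real n)\<close> \<open>n \<ge> 2\<close> by (simp add: less_divide_eq)
  then obtain \<epsilon> where "0 < \<epsilon>" "\<epsilon> < 1" and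
      K_large: "a * ln ((1 + \<epsilon>) * real n) < ln ((1 - \<epsilon>) ^ 3 / (1 + \<epsilon>) * f n)"
        "a * ln (real n) < ln ((1 - \<epsilon>) ^ 3 / (1 + \<epsilon>) * f n)"
    using exists_small_dilation_loss[of "f n" "real n" a] \<open>f n > 0\<close> \<open>n \<ge> 2\<close> by auto
  define c where "c = (1 - \<epsilon>) ^ 3 / (1 + \<epsilon>) * f n"
  define A where "A = (1 + \<epsilon>) * real n"
  have "real n \<le> A" using \<open>0 < \<epsilon>\<close> unfolding A_def by (simp add: algebra_simps)
  have "c > 0" using \<open>\<epsilon> < 1\<close> \<open>f n > 0\<close> \<open>0 < \<epsilon>\<close> unfolding c_def by simp
  obtain C where "C > 0" and dil: "\<And>y z. 0 < y \<Longrightarrow> y \<le> z \<Longrightarrow> z \<le> A * y \<Longrightarrow> C * g y \<le> g z"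
    using regular_imp_dilation_lower_bound[OF g_pos reg, of A] by auto
  obtain T where T: "\<And>y. y \<ge> T \<Longrightarrow> \<exists>z. real n * y \<le> z \<and> z \<le> A * y \<and> c * g y \<le> g z"
    using eventually_dilation_step[OF g_pos wsm normal reg _ _ \<open>0 < \<epsilon>\<close> \<open>\<epsilon> < 1\<close>, of n]
      \<open>n \<ge> 2\<close> \<open>f n > 0\<close> unfolding eventually_at_top_linorder A_def c_def by auto
  have "\<forall>\<^sub>F y in at_top. a * ln y < ln (g y)"
  proof (rule eventually_mult_ln_less_of_steps[where q = "real n" and Y = "max T 1"])
    fix y assume "max T 1 \<le> y"
    then obtain z where z: "real n * y \<le> z" "z \<le> A * y" "c * g y \<le> g z" using T by force
    have "g y > 0" using g_pos \<open>max T 1 \<le> y\<close> by simp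
    then have "ln (c * g y) \<le> ln (g z)" using z(3) \<open>c > 0\<close> by (simp add: ln_mono)
    then have "ln (g y) + ln c \<le> ln (g z)"
      using \<open>c > 0\<close> \<open>g y > 0\<close> by (simp add: ln_mult)
    with z show "\<exists>z. real n * y \<le> z \<and> z \<le> A * y \<and> ln (g y) + ln c \<le> ln (g z)" by blast
  next
    fix y z assume "max T 1 \<le> y" "y \<le> z" "z \<le> A * y"
    then have "g y > 0" "C * g y \<le> g z" using g_pos dil[of y z] by auto
    then have "ln (C * g y) \<le> ln (g z)" using \<open>C > 0\<close> by (simp add: ln_mono)
    then show "ln (g y) - - ln C \<le> ln (g z)"
      using \<open>C > 0\<close> \<open>g y > 0\<close> by (simp add: ln_mult)
  qed (use \<open>n \<ge> 2\<close> \<open>real n \<le> A\<close> K_large[folded c_def] in \<open>auto simp: A_def\<close>)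
  then show ?thesis
    using eventually_gt_at_top[of 1] by eventually_elim (simp add: less_divide_eq)
qed

lemma exists_pos_value:
  fixes f :: "nat \<Rightarrow> real" and g :: "real \<Rightarrow> real"
  assumes g_pos: "\<And>y. y > 0 \<Longrightarrow> g y > 0"
    and wsm: "weakly_super_multiplicative f" and normal: "has_normal_order f g"
  shows "\<exists>n\<ge>2. f n > 0"
proof -
  have "\<forall>\<^sub>F x in at_top. \<exists>m. x \<le> real m \<and> \<bar>f m - g (real m)\<bar> < 1/2 * g (real m)"
    by (rule eventually_mono[OF eventually_exists_good_multiplier[OF wsm normal, of 1 "1/2"]]) auto
  then obtain N where "\<And>x. x \<ge> N \<Longrightarrow> \<exists>m. x \<le> real m \<and> \<bar>f m - g (real m)\<bar> < 1/2 * g (real m)"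
    unfolding eventually_at_top_linorder by blast
  from this[of "max N 2"] obtain m where "2 \<le> real m" "\<bar>f m - g (real m)\<bar> < 1/2 * g (real m)"
    by auto
  moreover have "g (real m) > 0" using g_pos \<open>2 \<le> real m\<close> by simp
  ultimately have "f m > 0" using abs_ge_minus_self[of "f m - g (real m)"] by linarith
  then show ?thesis using \<open>2 \<le> real m\<close> by (intro exI[of _ m]) simp
qed

lemma le_powr_of_log_ratio_less:
  assumes "n \<ge> 2" "f n \<ge> 0" "log_ratio f n < ereal b"
  shows "f n \<le> real n powr b"
proof (cases "f n = 0")
  case False
  then have "ln (f n) < b * ln (real n)"
    using assms by (simp add: log_ratio_def divide_less_eq)
  have "f n = exp (ln (f n))" using \<open>f n \<ge> 0\<close> False by simp
  also have "\<dots> < exp (b * ln (real n))" using \<open>ln (f n) < b * ln (real n)\<close> by simp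
  also have "\<dots> = real n powr b" using \<open>n \<ge> 2\<close> by (simp add: powr_def)
  finally show ?thesis by simp
qed simp

lemma eventually_less_ln_ratio_SUP:
  fixes f :: "nat \<Rightarrow> real" and g :: "real \<Rightarrow> real"
  assumes f_nonneg: "\<And>n. n \<ge> 1 \<Longrightarrow> f n \<ge> 0" and g_pos: "\<And>y. y > 0 \<Longrightarrow> g y > 0"
    and wsm: "weakly_super_multiplicative f" and normal: "has_normal_order f g"
    and reg: "mono_on {0<..} g \<or> log_uniformly_continuous g"
    and "l < (SUP n\<in>{2..}. log_ratio f n)"
  shows "\<forall>\<^sub>F y in at_top. l < ereal (ln (g y) / ln y)"
proof -
  obtain n where "n \<ge> 2" and "l < log_ratio f n"
    using \<open>l < (SUP n\<in>{2..}. log_ratio f n)\<close> by (auto simp: less_SUP_iff)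
  then have "f n > 0" and "l < ereal (ln (f n) / ln (real n))"
    using f_nonneg[of n] by (auto simp: log_ratio_def split: if_splits)
  then obtain a where "l < ereal a" and a: "a < ln (f n) / ln (real n)"
    using ereal_dense2[OF \<open>l < ereal (ln (f n) / ln (real n))\<close>] by auto
  have "\<forall>\<^sub>F y in at_top. a < ln (g y) / ln y"
    using eventually_less_ln_ratio_of_less[OF g_pos wsm normal reg \<open>n \<ge> 2\<close> \<open>f n > 0\<close> a] by simp
  then show ?thesis
    by (rule eventually_mono) (use \<open>l < ereal a\<close> in \<open>metis less_ereal.simps(1) less_trans\<close>)
qed

lemma eventually_ln_ratio_less_SUP:
  fixes f :: "nat \<Rightarrow> real" and g :: "real \<Rightarrow> real"
  assumes f_nonneg: "\<And>n. n \<ge> 1 \<Longrightarrow> f n \<ge> 0" and g_pos: "\<And>y. y > 0 \<Longrightarrow> g y > 0"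
    and wsm: "weakly_super_multiplicative f" and normal: "has_normal_order f g"
    and reg: "mono_on {0<..} g \<or> log_uniformly_continuous g"
    and "(SUP n\<in>{2..}. log_ratio f n) < u"
  shows "\<forall>\<^sub>F y in at_top. ereal (ln (g y) / ln y) < u"
proof -
  obtain b where b: "(SUP n\<in>{2..}. log_ratio f n) < ereal b" "ereal b < u"
    using ereal_dense2[OF \<open>(SUP n\<in>{2..}. log_ratio f n) < u\<close>] by blast
  then obtain c where "b < c" "ereal c < u"
    using ereal_dense2[OF b(2)] by auto
  have f_le: "f n \<le> real n powr b" if "n \<ge> 2" for n
    using that f_nonneg[of n] b(1) SUP_upper[of n "{2..}" "log_ratio f"]
    by (intro le_powr_of_log_ratio_less) auto
  have "\<forall>\<^sub>F y in at_top. ln (g y) / ln y < c"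
    using eventually_ln_ratio_less_of_powr_bound[OF g_pos wsm normal reg f_le \<open>b < c\<close>] by simp
  then show ?thesis
    by (rule eventually_mono) (use \<open>ereal c < u\<close> in \<open>metis less_ereal.simps(1) less_trans\<close>)
qed

theorem mainTheorem3:
  fixes f :: "nat \<Rightarrow> real" and g :: "real \<Rightarrow> real"
  assumes f_nonneg: "\<And>n. n \<ge> 1 \<Longrightarrow> f n \<ge> 0"
    and g_pos: "\<And>y. y > 0 \<Longrightarrow> g y > 0"
    and wsm: "weakly_super_multiplicative f"
    and normal: "has_normal_order f g"
    and reg: "mono_on {0<..} g \<or> log_uniformly_continuous g"
  shows "(SUP n\<in>{2..}. log_ratio f n) \<noteq> -\<infinity> \<and>
         ((\<lambda>y. ereal (ln (g y) / ln y)) \<longlongrightarrow> (SUP n\<in>{2..}. log_ratio f n)) at_top"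
proof
  obtain n where "n \<ge> 2" "f n > 0" using exists_pos_value[OF g_pos wsm normal] by blast
  then have "ereal (ln (f n) / ln (real n)) \<le> (SUP n\<in>{2..}. log_ratio f n)"
    using SUP_upper[of n "{2..}" "log_ratio f"] by (simp add: log_ratio_def)
  then show "(SUP n\<in>{2..}. log_ratio f n) \<noteq> -\<infinity>" by auto
next
  show "((\<lambda>y. ereal (ln (g y) / ln y)) \<longlongrightarrow> (SUP n\<in>{2..}. log_ratio f n)) at_top"
    using eventually_less_ln_ratio_SUP[OF f_nonneg g_pos wsm normal reg]
      eventually_ln_ratio_less_SUP[OF f_nonneg g_pos wsm normal reg]
    by (rule order_tendstoI)
qed

end
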